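(* Let $X\subset\mathbb{C}^2$ be a Riemann surface embedded in $\mathbb{C}^2$ (a one-dimensional complex submanifold), let $\pi:\mathbb{C}^2\to\mathbb{C}$, $\pi(x,y)=x$, and suppose that $\pi_X=\pi|_X:X\to\mathbb{C}$ is a proper map. Let $P\subset X$ be a closed discrete subset. Suppose that for every $x\in\mathbb{C}$ such that the fibre $\pi_X^{-1}(x)$ contains a point of $P$, one of the following holds: either $\pi_X^{-1}(x)\subset P$, or all but exactly one point of $\pi_X^{-1}(x)$ lie in $P$ and $\pi_X$ is a submersion (i.e. has nonzero differential) at the unique point of $\pi_X^{-1}(x)\setminus P$. Then $X\setminus P$ admits a proper holomorphic embedding into $\mathbb{C}^2$. *)

theory Defs
  imports "HOL-Complex_Analysis.Complex_Analysis"
begin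

text \<open>C^2 is modelled as complex \<times> complex; pi is fst.\<close>

definition chart :: "(complex \<times> complex) set \<Rightarrow> (complex \<Rightarrow> complex \<times> complex) \<Rightarrow> complex set \<Rightarrow> bool" where
  "chart X \<gamma> V \<longleftrightarrow> open V \<and>
     (fst \<circ> \<gamma>) holomorphic_on V \<and> (snd \<circ> \<gamma>) holomorphic_on V \<and>
     (\<forall>t\<in>V. (deriv (fst \<circ> \<gamma>) t, deriv (snd \<circ> \<gamma>) t) \<noteq> (0, 0)) \<and>
     inj_on \<gamma> V \<and>
     (\<exists>U. open U \<and> \<gamma> ` V = X \<inter> U) \<and>
     continuous_on (\<gamma> ` V) (inv_into V \<gamma>)"

definition riemann_surface_in_C2 :: "(complex \<times> complex) set \<Rightarrow> bool" where
  "riemann_surface_in_C2 X \<longleftrightarrow> X \<noteq> {} \<and> connected X \<and>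
     (\<forall>p\<in>X. \<exists>\<gamma> V. chart X \<gamma> V \<and> p \<in> \<gamma> ` V)"

definition proj_proper :: "(complex \<times> complex) set \<Rightarrow> bool" where
  "proj_proper X \<longleftrightarrow> (\<forall>K. compact K \<longrightarrow> compact {z\<in>X. fst z \<in> K})"

definition closed_discrete_in :: "(complex \<times> complex) set \<Rightarrow> (complex \<times> complex) set \<Rightarrow> bool" where
  "closed_discrete_in X P \<longleftrightarrow> P \<subseteq> X \<and> closedin (top_of_set X) P \<and>
     (\<forall>p\<in>P. \<exists>e>0. ball p e \<inter> P = {p})"

definition proj_submersion_at :: "(complex \<times> complex) set \<Rightarrow> complex \<times> complex \<Rightarrow> bool" where
  "proj_submersion_at X q \<longleftrightarrow>
     (\<exists>\<gamma> V t. chart X \<gamma> V \<and> t \<in> V \<and> \<gamma> t = q \<and> deriv (fst \<circ> \<gamma>) t \<noteq> 0)"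

definition holo_on_sub :: "(complex \<times> complex) set \<Rightarrow> (complex \<times> complex) set \<Rightarrow>
    (complex \<times> complex \<Rightarrow> complex \<times> complex) \<Rightarrow> bool" where
  "holo_on_sub X Y f \<longleftrightarrow> (\<forall>\<gamma> V. chart X \<gamma> V \<longrightarrow>
     (fst \<circ> f \<circ> \<gamma>) holomorphic_on (V \<inter> \<gamma> -` Y) \<and> (snd \<circ> f \<circ> \<gamma>) holomorphic_on (V \<inter> \<gamma> -` Y))"

definition proper_holo_embedding :: "(complex \<times> complex) set \<Rightarrow> (complex \<times> complex) set \<Rightarrow>
    (complex \<times> complex \<Rightarrow> complex \<times> complex) \<Rightarrow> bool" where
  "proper_holo_embedding X Y f \<longleftrightarrow> holo_on_sub X Y f \<and> inj_on f Y \<and>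
     (\<forall>\<gamma> V t. chart X \<gamma> V \<and> t \<in> V \<and> \<gamma> t \<in> Y \<longrightarrow>
        (deriv (fst \<circ> f \<circ> \<gamma>) t, deriv (snd \<circ> f \<circ> \<gamma>) t) \<noteq> (0, 0)) \<and>
     continuous_on (f ` Y) (inv_into Y f) \<and>
     (\<forall>K. compact K \<longrightarrow> compact (Y \<inter> f -` K))"

end

theory Submission
  imports Defs
begin

text \<open>
  Let \<open>A = \<pi>(P)\<close>; properness of \<open>\<pi>\<^sub>X\<close> makes it a closed discrete subset of \<open>\<complex>\<close>. Take an entire
  function \<open>g\<close> whose zeros are exactly the points of \<open>A\<close>, all simple, and an entire function
  \<open>\<beta>\<close> which at every \<open>x \<in> A\<close> takes the \<open>y\<close>-coordinate of the point of \<open>X \<setminus> P\<close> over \<open>x\<close>, if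
  there is one, and otherwise a value avoiding the \<open>y\<close>-coordinates of the finitely many
  points of \<open>P\<close> over \<open>x\<close>. Then \<open>\<Phi>(x, y) = (x, (y - \<beta>(x)) / g(x))\<close> is a proper holomorphic
  embedding of \<open>X \<setminus> P\<close>. It preserves the fibres of \<open>\<pi>\<close> and is affine on each fibre off \<open>A\<close>,
  hence injective. At a point of \<open>X \<setminus> P\<close> over \<open>A\<close> numerator and denominator both vanish to
  first order along \<open>X\<close>, because \<open>\<pi>\<^sub>X\<close> is a submersion there, so the singularity is
  removable and \<open>\<Phi>\<close> is an immersion. Approaching a point of \<open>P\<close>, the numerator stays away
  from \<open>0\<close> while \<open>g \<rightarrow> 0\<close>, so \<open>\<Phi>\<close> tends to infinity; this gives properness.
\<close>

definition entire_simple_zeros :: "(complex \<Rightarrow> complex) \<Rightarrow> complex set \<Rightarrow> bool" where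
  "entire_simple_zeros g A \<longleftrightarrow> g holomorphic_on UNIV \<and> (\<forall>z. g z = 0 \<longleftrightarrow> z \<in> A) \<and>
     (\<forall>z\<in>A. deriv g z \<noteq> 0)"

lemma entire_field_differentiable:
  "f holomorphic_on UNIV \<Longrightarrow> f field_differentiable at z"
  by (erule holomorphic_on_imp_differentiable_at) auto

lemma deriv_nonzero_if_zorder_eq_1:
  fixes f :: "complex \<Rightarrow> complex"
  assumes f: "f holomorphic_on UNIV" and "f z = 0" "zorder f z = 1" "f w \<noteq> 0"
  shows "deriv f z \<noteq> 0"
proof
  assume "deriv f z = 0"
  have "zorder f z \<ge> int 2"
  proof (rule zorder_geI[of f z UNIV w])
    show "f analytic_on {z}"
      using f analytic_on_holomorphic by blast
    show "(deriv ^^ k) f z = 0" if "k < 2" for k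
      using that \<open>f z = 0\<close> \<open>deriv f z = 0\<close> by (auto dest: less_2_cases)
  qed (use assms in auto)
  with \<open>zorder f z = 1\<close> show False by simp
qed

lemma entire_simple_zeros_empty: "entire_simple_zeros (\<lambda>_. 1) {}"
  by (simp add: entire_simple_zeros_def)

lemma entire_simple_zeros_insert:
  assumes f: "entire_simple_zeros f A" and b: "b \<notin> A"
  shows "entire_simple_zeros (\<lambda>w. (w - b) * f w) (insert b A)"
proof -
  have hol: "f holomorphic_on UNIV" and zero: "\<And>z. f z = 0 \<longleftrightarrow> z \<in> A"
    and simple: "\<And>z. z \<in> A \<Longrightarrow> deriv f z \<noteq> 0"
    using f by (auto simp: entire_simple_zeros_def)
  have deriv_eq: "deriv (\<lambda>w. (w - b) * f w) z = f z + (z - b) * deriv f z" for z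
  proof -
    have "(f has_field_derivative deriv f z) (at z)" using hol by (simp add: holomorphic_derivI)
    hence "((\<lambda>w. (w - b) * f w) has_field_derivative (1 * f z + (z - b) * deriv f z)) (at z)"
      by (intro derivative_eq_intros) auto
    thus ?thesis by (simp add: DERIV_imp_deriv)
  qed
  have "deriv (\<lambda>w. (w - b) * f w) z \<noteq> 0" if "z \<in> insert b A" for z
  proof (cases "z = b")
    case True
    thus ?thesis using deriv_eq zero b by simp
  next
    case False
    hence "z \<in> A" "z - b \<noteq> 0" using that by auto
    moreover from \<open>z \<in> A\<close> have "f z = 0" using zero by blast
    ultimately show ?thesis using deriv_eq simple by simp
  qed
  moreover have "(\<lambda>w. (w - b) * f w) holomorphic_on UNIV"
    by (intro holomorphic_on_mult holomorphic_on_diff holomorphic_on_ident holomorphic_on_const hol)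
  ultimately show ?thesis
    using zero b unfolding entire_simple_zeros_def by auto
qed

lemma entire_simple_zeros_finite:
  assumes "finite A"
  shows "\<exists>g. entire_simple_zeros g A"
  using assms
proof (induction A rule: finite_induct)
  case empty
  show ?case using entire_simple_zeros_empty by blast
next
  case (insert b A)
  thus ?case using entire_simple_zeros_insert by blast
qed

lemma entire_simple_zeros_sequence:
  fixes a :: "nat \<Rightarrow> complex"
  assumes inj: "inj a" and nonzero: "\<And>n. a n \<noteq> 0" and lim: "filterlim a at_infinity at_top"
  shows "\<exists>f. entire_simple_zeros f (range a)"
proof -
  interpret W: weierstrass_product' a
  proof
    show "finite (a -` {z})" for z using inj by (simp add: finite_vimageI)
  qed (fact nonzero lim)+
  have "deriv W.f z \<noteq> 0" if "z \<in> range a" for z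
  proof (rule deriv_nonzero_if_zorder_eq_1[OF W.holomorphic])
    show "W.f z = 0" "W.f 0 \<noteq> 0" using that W.zero nonzero by (auto simp: image_iff)
    have "a -` {z} = {inv a z}" using inj that by (auto simp: inj_def f_inv_into_f)
    thus "zorder W.f z = 1" using W.zorder[of z] by simp
  qed
  thus ?thesis
    unfolding entire_simple_zeros_def using W.holomorphic W.zero by blast
qed

lemma entire_simple_zeros_exists:
  fixes A :: "complex set"
  assumes A: "\<And>z. \<not> z islimpt A"
  obtains g where "entire_simple_zeros g A"
proof (cases "finite A")
  case True
  thus ?thesis using entire_simple_zeros_finite that by blast
next
  case False
  have A': "\<not> z islimpt (A - {0})" for z
    using A islimpt_subset by blast
  have "infinite (A - {0})" using False by simp
  moreover have "closed (A - {0})" using A' closed_limpt by blast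
  moreover have "finite ((A - {0}) \<inter> cball 0 r)" for r
    using finite_not_islimpt_in_compact[OF compact_cball A'] by (simp add: Int_commute)
  ultimately obtain a :: "nat \<Rightarrow> complex"
    where a: "inj a" "range a = A - {0}" "filterlim a at_infinity at_top"
    by (rule sequence_of_sparse_set_exists) blast
  moreover have "a n \<noteq> 0" for n using a(2) by (metis Diff_iff insertI1 rangeI)
  ultimately obtain f where f: "entire_simple_zeros f (A - {0})"
    using entire_simple_zeros_sequence[of a] by auto
  show ?thesis
  proof (cases "0 \<in> A")
    case True
    hence "entire_simple_zeros (\<lambda>w. (w - 0) * f w) A"
      using entire_simple_zeros_insert[OF f, of 0] by (simp add: insert_absorb)
    thus ?thesis by (rule that)
  next
    case False
    thus ?thesis using f that by simp
  qed
qed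

definition lagrange_basis :: "(complex \<Rightarrow> complex) \<Rightarrow> complex \<Rightarrow> complex \<Rightarrow> complex" where
  "lagrange_basis g a w = (if w = a then 1 else g w / (deriv g a * (w - a)))"

lemma
  assumes "entire_simple_zeros g A" "a \<in> A"
  shows holomorphic_lagrange_basis: "lagrange_basis g a holomorphic_on UNIV"
    and lagrange_basis_same: "lagrange_basis g a a = 1"
    and lagrange_basis_other: "\<And>b. b \<in> A \<Longrightarrow> b \<noteq> a \<Longrightarrow> lagrange_basis g a b = 0"
proof -
  have g: "g holomorphic_on UNIV" and "g a = 0" and d: "deriv g a \<noteq> 0"
    and zero: "\<And>z. g z = 0 \<longleftrightarrow> z \<in> A"
    using assms by (auto simp: entire_simple_zeros_def)
  have "(\<lambda>w. inverse (deriv g a) * (if w = a then deriv g a else (g w - g a) / (w - a)))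
      holomorphic_on UNIV"
    by (intro holomorphic_on_mult holomorphic_on_const pole_lemma_open[OF g]) simp
  thus "lagrange_basis g a holomorphic_on UNIV"
    by (rule holomorphic_transform) (use \<open>g a = 0\<close> d in \<open>auto simp: lagrange_basis_def field_simps\<close>)
  show "lagrange_basis g a a = 1" by (simp add: lagrange_basis_def)
  show "lagrange_basis g a b = 0" if "b \<in> A" "b \<noteq> a" for b
    using that zero[of b] by (simp add: lagrange_basis_def)
qed

lemma decay_exponents_exist:
  fixes u :: "nat \<Rightarrow> complex \<Rightarrow> complex" and a :: "nat \<Rightarrow> complex"
  assumes u: "\<And>n. u n holomorphic_on UNIV" and a: "\<And>n. a n \<noteq> c"
  obtains k where "\<And>n w. dist c w \<le> norm (a n - c) / 2 \<Longrightarrow>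
    norm (u n w * ((w - c) / (a n - c)) ^ k n) \<le> (1/2) ^ n"
proof -
  have "\<exists>B. \<forall>w\<in>cball c (norm (a n - c) / 2). norm (u n w) \<le> B" for n
  proof -
    have "compact (u n ` cball c (norm (a n - c) / 2))"
      by (intro compact_continuous_image holomorphic_on_imp_continuous_on
          holomorphic_on_subset[OF u]) auto
    thus ?thesis by (meson bounded_iff compact_imp_bounded image_eqI)
  qed
  then obtain B where B: "\<And>n w. dist c w \<le> norm (a n - c) / 2 \<Longrightarrow> norm (u n w) \<le> B n"
    by (metis mem_cball)
  have "\<exists>k. max (B n) 1 * (1/2) ^ k \<le> (1/2::real) ^ n" for n
  proof -
    obtain k where "(1/2::real) ^ k < (1/2) ^ n / max (B n) 1"
      using real_arch_pow_inv[of "(1/2) ^ n / max (B n) 1" "1/2"] by auto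
    hence "max (B n) 1 * (1/2) ^ k < (1/2::real) ^ n" by (simp add: field_simps)
    thus ?thesis by (blast intro: less_imp_le)
  qed
  then obtain k where k: "\<And>n. max (B n) 1 * (1/2) ^ k n \<le> (1/2::real) ^ n"
    by metis
  show ?thesis
  proof (rule that)
    fix n w assume w: "dist c w \<le> norm (a n - c) / 2"
    have "norm ((w - c) / (a n - c)) \<le> 1/2"
      using w a[of n] by (simp add: dist_norm norm_divide norm_minus_commute)
    hence "norm (u n w * ((w - c) / (a n - c)) ^ k n) \<le> max (B n) 1 * (1/2) ^ k n"
      unfolding norm_mult norm_power
      by (intro mult_mono power_mono order_trans[OF B[OF w]]) auto
    thus "norm (u n w * ((w - c) / (a n - c)) ^ k n) \<le> (1/2) ^ n"
      using k order_trans by blast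
  qed
qed

lemma holomorphic_suminf_bounded_on_growing_balls:
  fixes t :: "nat \<Rightarrow> complex \<Rightarrow> complex"
  assumes t: "\<And>n. t n holomorphic_on UNIV" and r: "filterlim r at_top sequentially"
    and bound: "\<And>n w. dist c w \<le> r n \<Longrightarrow> norm (t n w) \<le> M n" and M: "summable M"
  shows "(\<lambda>w. \<Sum>n. t n w) holomorphic_on UNIV"
proof (rule holomorphic_uniform_sequence[where f="\<lambda>n w. \<Sum>i<n. t i w", OF open_UNIV])
  show "(\<lambda>w. \<Sum>i<n. t i w) holomorphic_on UNIV" for n
    by (rule holomorphic_on_sum[OF t])
  fix x :: complex
  have "eventually (\<lambda>n. dist c x + 1 \<le> r n) sequentially"
    using r by (simp add: filterlim_at_top)
  hence "eventually (\<lambda>n. \<forall>w\<in>cball x 1. norm (t n w) \<le> M n) sequentially"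
  proof eventually_elim
    case (elim n)
    show ?case
    proof
      fix w assume "w \<in> cball x 1"
      hence "dist x w \<le> 1" by simp
      hence "dist c w \<le> r n" using dist_triangle[of c w x] elim by linarith
      thus "norm (t n w) \<le> M n" by (rule bound)
    qed
  qed
  hence "uniform_limit (cball x 1) (\<lambda>n w. \<Sum>i<n. t i w) (\<lambda>w. \<Sum>n. t n w) sequentially"
    using M by (rule Weierstrass_m_test_ev)
  thus "\<exists>d>0. cball x d \<subseteq> UNIV \<and>
      uniform_limit (cball x d) (\<lambda>n w. \<Sum>i<n. t i w) (\<lambda>w. \<Sum>n. t n w) sequentially"
    by (intro exI[of _ 1]) auto
qed

text \<open>The factor \<open>((w - c) / (a n - c)) ^ k n\<close> equals \<open>1\<close> at \<open>a n\<close> and has modulus at most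
  \<open>(1/2) ^ k n\<close> on the disc of radius \<open>norm (a n - c) / 2\<close> about \<open>c\<close>; since these discs exhaust
  \<open>\<complex>\<close>, large enough exponents make the series converge locally uniformly.\<close>

lemma entire_series_with_decay_factors:
  fixes u :: "nat \<Rightarrow> complex \<Rightarrow> complex" and a :: "nat \<Rightarrow> complex"
  assumes u: "\<And>n. u n holomorphic_on UNIV"
    and a: "filterlim a at_infinity sequentially" "\<And>n. a n \<noteq> c"
  obtains k where "(\<lambda>w. \<Sum>n. u n w * ((w - c) / (a n - c)) ^ k n) holomorphic_on UNIV"
proof -
  obtain k where k: "\<And>n w. dist c w \<le> norm (a n - c) / 2 \<Longrightarrow>
      norm (u n w * ((w - c) / (a n - c)) ^ k n) \<le> (1/2) ^ n"
    using decay_exponents_exist[where u=u and a=a and c=c, OF u a(2)] by blast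
  have "filterlim (\<lambda>n. norm (a n - c)) at_top sequentially"
    using tendsto_add_filterlim_at_infinity'[OF a(1) tendsto_const[of "- c"]]
    by (simp add: filterlim_at_infinity_conv_norm_at_top)
  hence "filterlim (\<lambda>n. norm (a n - c) * (1/2)) at_top sequentially"
    by (rule filterlim_at_top_mult_tendsto_pos[OF tendsto_const, rotated]) simp
  hence r: "filterlim (\<lambda>n. norm (a n - c) / 2) at_top sequentially" by simp
  have "(\<lambda>w. ((w - c) / (a n - c)) ^ k n) holomorphic_on UNIV" for n
    using a(2)[of n] by (intro holomorphic_intros) auto
  hence t: "(\<lambda>w. u n w * ((w - c) / (a n - c)) ^ k n) holomorphic_on UNIV" for n
    by (rule holomorphic_on_mult[OF u])
  have M: "summable (\<lambda>n. (1/2::real) ^ n)" by (simp add: summable_geometric)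
  show ?thesis
    by (rule that, rule holomorphic_suminf_bounded_on_growing_balls[where
          t="\<lambda>n w. u n w * ((w - c) / (a n - c)) ^ k n" and c=c and M="\<lambda>n. (1/2) ^ n",
          OF t r k M])
qed

lemma entire_interpolation_finite:
  assumes "finite A" and g: "entire_simple_zeros g A"
  shows "(\<lambda>w. \<Sum>a\<in>A. v a * lagrange_basis g a w) holomorphic_on UNIV"
    and "z \<in> A \<Longrightarrow> (\<Sum>a\<in>A. v a * lagrange_basis g a z) = v z"
proof -
  show "(\<lambda>w. \<Sum>a\<in>A. v a * lagrange_basis g a w) holomorphic_on UNIV"
    by (auto intro!: holomorphic_on_sum holomorphic_on_mult holomorphic_on_const
        holomorphic_lagrange_basis[OF g])
  assume z: "z \<in> A"
  have "(\<Sum>a\<in>A - {z}. v a * lagrange_basis g a z) = 0"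
    using lagrange_basis_other[OF g] z by (intro sum.neutral) auto
  thus "(\<Sum>a\<in>A. v a * lagrange_basis g a z) = v z"
    using sum.remove[OF \<open>finite A\<close> z, of "\<lambda>a. v a * lagrange_basis g a z"]
      lagrange_basis_same[OF g z] by simp
qed

lemma entire_interpolation_exists:
  fixes A :: "complex set" and g v :: "complex \<Rightarrow> complex"
  assumes A: "\<And>z. \<not> z islimpt A" and g: "entire_simple_zeros g A"
  obtains \<beta> where "\<beta> holomorphic_on UNIV" "\<And>z. z \<in> A \<Longrightarrow> \<beta> z = v z"
proof (cases "finite A")
  case True
  thus ?thesis using that entire_interpolation_finite[OF True g] by blast
next
  case False
  obtain z0 where z0: "z0 \<notin> A"
    using A[of 0] islimpt_UNIV by (metis UNIV_eq_I)
  have "closed A" using A closed_limpt by blast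
  moreover have "finite (A \<inter> cball 0 r)" for r
    using finite_not_islimpt_in_compact[OF compact_cball A] by (simp add: Int_commute)
  ultimately obtain a :: "nat \<Rightarrow> complex"
    where a: "inj a" "range a = A" "filterlim a at_infinity at_top"
    by (rule sequence_of_sparse_set_exists[OF False]) blast
  have a_ne: "a n \<noteq> z0" for n using a(2) z0 by auto
  have aA: "a n \<in> A" for n using a(2) by auto
  have u: "(\<lambda>w. v (a n) * lagrange_basis g (a n) w) holomorphic_on UNIV" for n
    by (intro holomorphic_on_mult holomorphic_on_const holomorphic_lagrange_basis[OF g aA])
  obtain k where hol:
    "(\<lambda>w. \<Sum>n. v (a n) * lagrange_basis g (a n) w * ((w - z0) / (a n - z0)) ^ k n) holomorphic_on UNIV"
    using entire_series_with_decay_factors[where u="\<lambda>n w. v (a n) * lagrange_basis g (a n) w"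
        and a=a and c=z0, OF u a(3) a_ne] by blast
  show ?thesis
  proof (rule that[OF hol])
    fix z assume "z \<in> A"
    then obtain j where j: "z = a j" using a(2) by auto
    have "(\<Sum>n. v (a n) * lagrange_basis g (a n) z * ((z - z0) / (a n - z0)) ^ k n)
        = (\<Sum>n\<in>{j}. v (a n) * lagrange_basis g (a n) z * ((z - z0) / (a n - z0)) ^ k n)"
    proof (rule suminf_finite)
      fix n assume "n \<notin> {j}"
      hence "z \<noteq> a n" using j a(1) by (auto dest: injD)
      thus "v (a n) * lagrange_basis g (a n) z * ((z - z0) / (a n - z0)) ^ k n = 0"
        using lagrange_basis_other[OF g aA \<open>z \<in> A\<close>] by simp
    qed simp
    also have "\<dots> = v z" using \<open>z \<in> A\<close> j lagrange_basis_same[OF g] a_ne by simp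
    finally show "(\<Sum>n. v (a n) * lagrange_basis g (a n) z * ((z - z0) / (a n - z0)) ^ k n) = v z" .
  qed
qed

lemma chart_continuous_on: "chart X \<gamma> V \<Longrightarrow> continuous_on V \<gamma>"
proof -
  assume c: "chart X \<gamma> V"
  have "continuous_on V (\<lambda>t. ((fst \<circ> \<gamma>) t, (snd \<circ> \<gamma>) t))"
    using c by (intro continuous_on_Pair holomorphic_on_imp_continuous_on) (auto simp: chart_def o_def)
  thus ?thesis by simp
qed

lemma chart_isCont: "chart X \<gamma> V \<Longrightarrow> t \<in> V \<Longrightarrow> isCont \<gamma> t"
  using chart_continuous_on[of X \<gamma> V] by (auto simp: chart_def continuous_on_eq_continuous_at)

lemma chart_image_subset: "chart X \<gamma> V \<Longrightarrow> \<gamma> ` V \<subseteq> X"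
  unfolding chart_def by auto

lemma filterlim_chart_at_within:
  assumes c: "chart X \<gamma> V" and t0: "t0 \<in> V"
  shows "filterlim \<gamma> (at (\<gamma> t0) within X) (at t0)"
  unfolding filterlim_at
proof
  have "eventually (\<lambda>t. t \<in> V) (at t0)"
    using c t0 by (intro eventually_at_in_open') (auto simp: chart_def)
  thus "eventually (\<lambda>t. \<gamma> t \<in> X \<and> \<gamma> t \<noteq> \<gamma> t0) (at t0)"
    unfolding eventually_at_filter
    by eventually_elim (use c t0 in \<open>auto simp: chart_def inj_on_def\<close>)
  show "(\<gamma> \<longlongrightarrow> \<gamma> t0) (at t0)"
    using chart_isCont[OF c t0] by (simp add: isCont_def)
qed

lemma at_within_chart_nontrivial:
  assumes "chart X \<gamma> V" "t0 \<in> V"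
  shows "at (\<gamma> t0) within X \<noteq> bot"
proof
  assume "at (\<gamma> t0) within X = bot"
  with filterlim_chart_at_within[OF assms] have "filterlim \<gamma> bot (at t0)" by simp
  thus False by (simp add: filterlim_def bot_unique filtermap_bot_iff)
qed

lemma tendsto_at_within_chart:
  assumes c: "chart X \<gamma> V" and s0: "s0 \<in> V"
    and lim: "((\<lambda>s. f (\<gamma> s)) \<longlongrightarrow> L) (at s0)"
  shows "(f \<longlongrightarrow> L) (at (\<gamma> s0) within X)"
proof -
  obtain U where U: "open U" "\<gamma> ` V = X \<inter> U" using c unfolding chart_def by blast
  define \<iota> where "\<iota> = inv_into V \<gamma>"
  have inj: "inj_on \<gamma> V" and cont: "continuous_on (\<gamma> ` V) \<iota>"
    using c by (auto simp: chart_def \<iota>_def)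
  have "(\<iota> \<longlongrightarrow> s0) (at (\<gamma> s0) within \<gamma> ` V)"
    using cont s0 inj unfolding continuous_on_def \<iota>_def by (metis image_eqI inv_into_f_f)
  moreover have "eventually (\<lambda>w. \<iota> w \<noteq> s0) (at (\<gamma> s0) within \<gamma> ` V)"
    unfolding eventually_at_filter by (rule always_eventually) (metis \<iota>_def f_inv_into_f)
  ultimately have "filterlim \<iota> (at s0) (at (\<gamma> s0) within \<gamma> ` V)"
    by (rule filterlim_atI)
  from filterlim_compose[OF lim this]
  have "((\<lambda>w. f (\<gamma> (\<iota> w))) \<longlongrightarrow> L) (at (\<gamma> s0) within \<gamma> ` V)" .
  moreover have "eventually (\<lambda>w. f (\<gamma> (\<iota> w)) = f w) (at (\<gamma> s0) within \<gamma> ` V)"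
    unfolding eventually_at_filter by (auto simp: \<iota>_def f_inv_into_f)
  ultimately have "(f \<longlongrightarrow> L) (at (\<gamma> s0) within \<gamma> ` V)"
    by (rule Lim_transform_eventually)
  moreover have "at (\<gamma> s0) within X = at (\<gamma> s0) within \<gamma> ` V"
    using U s0 by (intro at_within_nhd[of _ U]) auto
  ultimately show ?thesis by simp
qed

lemma proj_submersion_at_imp_locally_inj_fst:
  assumes "proj_submersion_at X q"
  obtains U where "open U" "q \<in> U" "inj_on fst (X \<inter> U)"
proof -
  obtain \<gamma> V s0 where c: "chart X \<gamma> V" and s0: "s0 \<in> V" "\<gamma> s0 = q"
    and d: "deriv (fst \<circ> \<gamma>) s0 \<noteq> 0"
    using assms unfolding proj_submersion_at_def by blast
  obtain U1 where U1: "open U1" "\<gamma> ` V = X \<inter> U1" using c unfolding chart_def by blast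
  have "open V" "(fst \<circ> \<gamma>) holomorphic_on V" and inj: "inj_on \<gamma> V"
    and cont: "continuous_on (\<gamma> ` V) (inv_into V \<gamma>)"
    using c by (auto simp: chart_def)
  then obtain r where r: "r > 0" "ball s0 r \<subseteq> V" "inj_on (fst \<circ> \<gamma>) (ball s0 r)"
    using has_complex_derivative_locally_injective[OF _ s0(1) _ d] by blast
  define \<iota> where "\<iota> = inv_into V \<gamma>"
  obtain U2 where U2: "open U2" "U2 \<inter> \<gamma> ` V = \<iota> -` ball s0 r \<inter> \<gamma> ` V"
    using cont unfolding continuous_on_open_invariant \<iota>_def by (meson open_ball)
  have \<iota>: "\<iota> w \<in> ball s0 r" "\<gamma> (\<iota> w) = w" if "w \<in> X \<inter> (U2 \<inter> U1)" for w
    using that U1 U2 by (auto simp: \<iota>_def f_inv_into_f)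
  show ?thesis
  proof (rule that[of "U2 \<inter> U1"])
    show "open (U2 \<inter> U1)" using U1 U2 by auto
    have "q \<in> \<gamma> ` V" using s0 by blast
    moreover have "\<iota> q \<in> ball s0 r"
      unfolding \<iota>_def using s0 inj r(1) by (metis centre_in_ball inv_into_f_f)
    ultimately show "q \<in> U2 \<inter> U1" using U1(2) U2(2) by blast
    show "inj_on fst (X \<inter> (U2 \<inter> U1))"
    proof (rule inj_onI)
      fix w w' assume w: "w \<in> X \<inter> (U2 \<inter> U1)" "w' \<in> X \<inter> (U2 \<inter> U1)" and "fst w = fst w'"
      hence "(fst \<circ> \<gamma>) (\<iota> w) = (fst \<circ> \<gamma>) (\<iota> w')" using \<iota> by simp
      hence "\<iota> w = \<iota> w'" using r(3) \<iota>[OF w(1)] \<iota>[OF w(2)] by (meson inj_onD)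
      thus "w = w'" using \<iota>(2)[OF w(1)] \<iota>(2)[OF w(2)] by metis
    qed
  qed
qed

lemma deriv_fst_chart_nonzero:
  assumes c: "chart X \<gamma> V" and t0: "t0 \<in> V" and q: "proj_submersion_at X (\<gamma> t0)"
  shows "deriv (fst \<circ> \<gamma>) t0 \<noteq> 0"
proof -
  obtain U where U: "open U" "\<gamma> t0 \<in> U" "inj_on fst (X \<inter> U)"
    using proj_submersion_at_imp_locally_inj_fst[OF q] by blast
  have "open V" and hol: "(fst \<circ> \<gamma>) holomorphic_on V" and inj: "inj_on \<gamma> V"
    using c by (auto simp: chart_def)
  have "open (V \<inter> \<gamma> -` U)"
    using continuous_open_preimage[OF chart_continuous_on[OF c] \<open>open V\<close> U(1)] .
  moreover have "inj_on (fst \<circ> \<gamma>) (V \<inter> \<gamma> -` U)"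
  proof (rule inj_onI)
    fix s s' assume s: "s \<in> V \<inter> \<gamma> -` U" "s' \<in> V \<inter> \<gamma> -` U"
      and "(fst \<circ> \<gamma>) s = (fst \<circ> \<gamma>) s'"
    moreover have "\<gamma> s \<in> X \<inter> U" "\<gamma> s' \<in> X \<inter> U"
      using s chart_image_subset[OF c] by auto
    ultimately have "\<gamma> s = \<gamma> s'" using inj_onD[OF U(3)] by simp
    thus "s = s'" using inj_onD[OF inj] s by blast
  qed
  moreover have "(fst \<circ> \<gamma>) holomorphic_on (V \<inter> \<gamma> -` U)"
    using hol by (rule holomorphic_on_subset) auto
  ultimately show ?thesis
    using holomorphic_injective_imp_regular t0 U(2) by blast
qed

lemma finite_closed_discrete_over_compact:
  assumes X: "proj_proper X" and P: "closed_discrete_in X P" and K: "compact K"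
  shows "finite {p\<in>P. fst p \<in> K}"
proof -
  obtain T where T: "closed T" "P = X \<inter> T"
    using P by (auto simp: closed_discrete_in_def closedin_closed)
  have "compact ({z\<in>X. fst z \<in> K} \<inter> T)"
    using X K T(1) by (intro compact_Int_closed) (auto simp: proj_proper_def)
  moreover have "{z\<in>X. fst z \<in> K} \<inter> T = {p\<in>P. fst p \<in> K}" using T by auto
  moreover have "discrete {p\<in>P. fst p \<in> K}"
  proof (rule discreteI)
    fix p assume "p \<in> {p\<in>P. fst p \<in> K}"
    moreover obtain e where "e > 0" "ball p e \<inter> P = {p}"
      using calculation P by (auto simp: closed_discrete_in_def)
    ultimately show "p isolated_in {p\<in>P. fst p \<in> K}"
      unfolding isolated_in_def by (intro conjI exI[of _ "ball p e"]) auto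
  qed
  ultimately show ?thesis using discrete_compact_finite_iff by metis
qed

lemma not_islimpt_fst_image:
  assumes "proj_proper X" "closed_discrete_in X P"
  shows "\<not> z islimpt fst ` P"
proof
  assume "z islimpt fst ` P"
  hence "infinite (fst ` P \<inter> cball z 1)" by (simp add: islimpt_eq_infinite_cball)
  moreover have "fst ` P \<inter> cball z 1 \<subseteq> fst ` {p\<in>P. fst p \<in> cball z 1}" by auto
  ultimately show False
    using finite_closed_discrete_over_compact[OF assms compact_cball] finite_subset by blast
qed

lemma unique_point_off_P:
  assumes H: "\<forall>x. (\<exists>p\<in>P. fst p = x) \<longrightarrow>
      ({z\<in>X. fst z = x} \<subseteq> P \<or> (\<exists>q. {z\<in>X. fst z = x} - P = {q} \<and> proj_submersion_at X q))"
    and z: "z \<in> X - P" "fst z \<in> fst ` P"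
  shows "{w\<in>X. fst w = fst z} - P = {z}" "proj_submersion_at X z"
proof -
  have "\<not> {w\<in>X. fst w = fst z} \<subseteq> P" using z(1) by blast
  moreover have "\<exists>p\<in>P. fst p = fst z" using z(2) by (metis imageE)
  ultimately obtain q where q: "{w\<in>X. fst w = fst z} - P = {q}" "proj_submersion_at X q"
    using H[rule_format, of "fst z"] by blast
  moreover have "z \<in> {w\<in>X. fst w = fst z} - P" using z(1) by simp
  ultimately have "z = q" by blast
  with q show "{w\<in>X. fst w = fst z} - P = {z}" "proj_submersion_at X z" by simp_all
qed

lemma fibre_values_exist:
  assumes X: "proj_proper X" and P: "closed_discrete_in X P"
    and H: "\<forall>x. (\<exists>p\<in>P. fst p = x) \<longrightarrow>
      ({z\<in>X. fst z = x} \<subseteq> P \<or> (\<exists>q. {z\<in>X. fst z = x} - P = {q} \<and> proj_submersion_at X q))"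
  obtains v where "\<And>p. p \<in> P \<Longrightarrow> snd p \<noteq> v (fst p)"
    "\<And>q. q \<in> X - P \<Longrightarrow> fst q \<in> fst ` P \<Longrightarrow> snd q = v (fst q)"
proof -
  have "\<forall>x\<in>fst ` P. \<exists>w. (\<forall>p\<in>P. fst p = x \<longrightarrow> snd p \<noteq> w) \<and> (\<forall>q\<in>X-P. fst q = x \<longrightarrow> snd q = w)"
  proof
    fix x assume x: "x \<in> fst ` P"
    show "\<exists>w. (\<forall>p\<in>P. fst p = x \<longrightarrow> snd p \<noteq> w) \<and> (\<forall>q\<in>X-P. fst q = x \<longrightarrow> snd q = w)"
    proof (cases "{z\<in>X. fst z = x} \<subseteq> P")
      case True
      have "finite (snd ` {p\<in>P. fst p \<in> {x}})"
        using finite_closed_discrete_over_compact[OF X P compact_sing] by blast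
      then obtain w where "w \<notin> snd ` {p\<in>P. fst p \<in> {x}}"
        using ex_new_if_finite[OF infinite_UNIV_char_0] by blast
      thus ?thesis using True by (intro exI[of _ w]) (auto simp: image_iff)
    next
      case False
      have "\<exists>p\<in>P. fst p = x" using x by (metis imageE)
      from H[rule_format, OF this] False obtain q where q: "{z\<in>X. fst z = x} - P = {q}"
        by blast
      have "q \<notin> P" "fst q = x" using q by auto
      hence "snd p \<noteq> snd q" if "p \<in> P" "fst p = x" for p
        using that prod_eqI[of p q] by auto
      moreover have "snd q' = snd q" if "q' \<in> X - P" "fst q' = x" for q'
      proof -
        have "q' \<in> {z\<in>X. fst z = x} - P" using that by simp
        thus ?thesis using q by simp
      qed
      ultimately show ?thesis by blast
    qed
  qed
  from bchoice[OF this] obtain v where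
    v: "\<forall>x\<in>fst ` P. (\<forall>p\<in>P. fst p = x \<longrightarrow> snd p \<noteq> v x) \<and> (\<forall>q\<in>X-P. fst q = x \<longrightarrow> snd q = v x)"
    by blast
  show ?thesis
  proof (rule that)
    show "snd p \<noteq> v (fst p)" if "p \<in> P" for p using v that by blast
    show "snd q = v (fst q)" if "q \<in> X - P" "fst q \<in> fst ` P" for q using v that by blast
  qed
qed

lemma filterlim_quotient_at_infinity:
  fixes f g :: "'b \<Rightarrow> 'a::real_normed_field"
  assumes "(f \<longlongrightarrow> c) F" "filterlim g (at 0) F" "c \<noteq> 0"
  shows "filterlim (\<lambda>x. f x / g x) at_infinity F"
proof -
  have "filterlim (\<lambda>x. f x * inverse (g x)) at_infinity F"
    by (intro tendsto_mult_filterlim_at_infinity[OF assms(1,3)]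
        filterlim_compose[OF filterlim_inverse_at_infinity assms(2)])
  thus ?thesis by (simp add: field_simps)
qed

text \<open>The points of \<open>X - P\<close> over zeros of \<open>g\<close> are called special. \<open>frac_ext\<close> extends \<open>frac\<close>
  to them by its limit along \<open>X\<close>; its values on \<open>P\<close> are junk and never used.\<close>

locale shear_embedding =
  fixes X P :: "(complex \<times> complex) set" and g \<beta> :: "complex \<Rightarrow> complex"
  assumes proj_proper: "proj_proper X"
    and discrete_P: "closed_discrete_in X P"
    and entire_g: "g holomorphic_on UNIV"
    and entire_\<beta>: "\<beta> holomorphic_on UNIV"
    and zeros_isolated: "\<And>a. eventually (\<lambda>x. g x \<noteq> 0) (at a)"
    and zeros_simple: "\<And>a. g a = 0 \<Longrightarrow> deriv g a \<noteq> 0"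
    and g_vanishes_on_P: "\<And>p. p \<in> P \<Longrightarrow> g (fst p) = 0"
    and \<beta>_misses_P: "\<And>p. p \<in> P \<Longrightarrow> \<beta> (fst p) \<noteq> snd p"
    and \<beta>_hits_special: "\<And>z. z \<in> X - P \<Longrightarrow> g (fst z) = 0 \<Longrightarrow> \<beta> (fst z) = snd z"
    and special_submersion: "\<And>z. z \<in> X - P \<Longrightarrow> g (fst z) = 0 \<Longrightarrow> proj_submersion_at X z"
    and special_unique:
      "\<And>z z'. z \<in> X - P \<Longrightarrow> g (fst z) = 0 \<Longrightarrow> z' \<in> X - P \<Longrightarrow> fst z' = fst z \<Longrightarrow> z' = z"
begin

definition frac :: "complex \<times> complex \<Rightarrow> complex" where
  "frac w = (snd w - \<beta> (fst w)) / g (fst w)"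

definition frac_ext :: "complex \<times> complex \<Rightarrow> complex" where
  "frac_ext w = (if g (fst w) \<noteq> 0 then frac w else Lim (at w within X) frac)"

definition \<Phi> :: "complex \<times> complex \<Rightarrow> complex \<times> complex" where
  "\<Phi> w = (fst w, frac_ext w)"

lemma isCont_g: "isCont g x"
  using entire_g by (simp add: entire_field_differentiable field_differentiable_imp_continuous_at)

lemma isCont_\<beta>: "isCont \<beta> x"
  using entire_\<beta> by (simp add: entire_field_differentiable field_differentiable_imp_continuous_at)

lemma eventually_notin_P:
  assumes "q \<in> X - P"
  shows "eventually (\<lambda>w. w \<notin> P) (nhds q)"
proof -
  obtain T where T: "closed T" "P = X \<inter> T"
    using discrete_P by (auto simp: closed_discrete_in_def closedin_closed)
  have "eventually (\<lambda>w. w \<in> - T) (nhds q)"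
    using T assms by (intro eventually_nhds_in_open) auto
  thus ?thesis by eventually_elim (use T in auto)
qed

lemma eventually_g_nonzero_off_fibre:
  "eventually (\<lambda>w. fst w \<noteq> fst q \<longrightarrow> g (fst w) \<noteq> 0) (nhds q)"
proof -
  have ev: "eventually (\<lambda>x. x \<noteq> fst q \<longrightarrow> g x \<noteq> 0) (nhds (fst q))"
    using zeros_isolated[of "fst q"] by (simp add: eventually_at_filter)
  have "filterlim fst (nhds (fst q)) (nhds q)"
    by (intro tendsto_fst filterlim_ident)
  from eventually_compose_filterlim[OF ev this] show ?thesis by simp
qed

lemma eventually_g_nonzero:
  fixes w0 :: "complex \<times> complex"
  assumes "g (fst w0) \<noteq> 0"
  shows "eventually (\<lambda>w. g (fst w) \<noteq> 0) (nhds w0)"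
proof -
  have "isCont (\<lambda>w. g (fst w)) w0" by (intro isCont_o2[OF isCont_fst isCont_g]) simp
  hence "eventually (\<lambda>w. g (fst w) \<noteq> 0) (at w0)"
    using assms unfolding isCont_def by (rule tendsto_imp_eventually_ne)
  thus ?thesis using assms by (auto simp: eventually_at_filter elim: eventually_mono)
qed

lemma eventually_regular_near_special:
  assumes q: "q \<in> X - P" "g (fst q) = 0"
  shows "eventually (\<lambda>w. w \<in> X \<longrightarrow> w \<noteq> q \<longrightarrow> w \<notin> P \<and> g (fst w) \<noteq> 0) (nhds q)"
  using eventually_notin_P[OF q(1)] eventually_g_nonzero_off_fibre[of q]
  by eventually_elim (use special_unique[OF q(1) q(2)] in auto)

lemma eventually_regular_near_P:
  assumes l: "l \<in> P"
  shows "eventually (\<lambda>w. w \<in> X - P \<longrightarrow> g (fst w) \<noteq> 0) (nhds l)"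
proof (cases "\<exists>q\<in>X-P. fst q = fst l")
  case True
  then obtain q where q: "q \<in> X - P" "fst q = fst l" by blast
  have "eventually (\<lambda>w. w \<in> - {q}) (nhds l)"
    using q l by (intro eventually_nhds_in_open) auto
  thus ?thesis using eventually_g_nonzero_off_fibre[of l]
  proof eventually_elim
    case (elim w)
    show ?case
    proof (intro impI notI)
      assume w: "w \<in> X - P" and g0: "g (fst w) = 0"
      hence "fst q = fst w" using elim q(2) by auto
      hence "q = w" using special_unique[OF w g0 q(1)] by simp
      thus False using elim by simp
    qed
  qed
next
  case False
  thus ?thesis using eventually_g_nonzero_off_fibre[of l] by (auto elim!: eventually_mono)
qed

text \<open>At a special point, \<open>frac\<close> is a quotient of two functions vanishing to first order
  along \<open>X\<close>; L'Hopital's rule in a chart in which \<open>\<pi>\<^sub>X\<close> is a submersion gives the limit.\<close>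

lemma frac_tendsto_special:
  assumes q: "q \<in> X - P" "g (fst q) = 0"
  shows "(frac \<longlongrightarrow> frac_ext q) (at q within X)"
proof -
  obtain \<gamma> V s0 where c: "chart X \<gamma> V" and s0: "s0 \<in> V" "\<gamma> s0 = q"
    and dx: "deriv (fst \<circ> \<gamma>) s0 \<noteq> 0"
    using special_submersion[OF q] unfolding proj_submersion_at_def by blast
  have "open V" "(fst \<circ> \<gamma>) holomorphic_on V" "(snd \<circ> \<gamma>) holomorphic_on V"
    using c by (auto simp: chart_def)
  hence dX: "((fst \<circ> \<gamma>) has_field_derivative deriv (fst \<circ> \<gamma>) s0) (at s0)"
    and dY: "((snd \<circ> \<gamma>) has_field_derivative deriv (snd \<circ> \<gamma>) s0) (at s0)"
    using s0 by (auto intro: holomorphic_derivI)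
  have d\<beta>: "(\<beta> has_field_derivative deriv \<beta> x) (at x)"
    and dg: "(g has_field_derivative deriv g x) (at x)" for x
    using entire_\<beta> entire_g by (auto intro: holomorphic_derivI)
  have dN: "((\<lambda>s. snd (\<gamma> s) - \<beta> (fst (\<gamma> s))) has_field_derivative
      deriv (snd \<circ> \<gamma>) s0 - deriv \<beta> (fst q) * deriv (fst \<circ> \<gamma>) s0) (at s0)"
    using DERIV_diff[OF dY DERIV_chain[OF d\<beta> dX]] s0 by (simp add: o_def)
  have dD: "((\<lambda>s. g (fst (\<gamma> s))) has_field_derivative
      deriv g (fst q) * deriv (fst \<circ> \<gamma>) s0) (at s0)"
    using DERIV_chain[OF dg dX] s0 by (simp add: o_def)
  obtain L where "((\<lambda>s. frac (\<gamma> s)) \<longlongrightarrow> L) (at s0)"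
    using lhopital_complex_simple[OF dN dD] \<beta>_hits_special[OF q] q(2) zeros_simple[OF q(2)] dx s0
    by (auto simp: frac_def)
  hence lim: "(frac \<longlongrightarrow> L) (at q within X)"
    using tendsto_at_within_chart[OF c s0(1)] s0 by simp
  moreover have "frac_ext q = L"
    using tendsto_Lim[OF at_within_chart_nontrivial[OF c s0(1), unfolded s0(2)] lim] q
    by (simp add: frac_ext_def)
  ultimately show ?thesis by simp
qed

lemma frac_ext_tendsto:
  assumes w0: "w0 \<in> X - P"
  shows "(frac_ext \<longlongrightarrow> frac_ext w0) (at w0 within X)"
proof (cases "g (fst w0) = 0")
  case True
  have "eventually (\<lambda>w. frac w = frac_ext w) (at w0 within X)"
    unfolding eventually_at_filter
    using eventually_regular_near_special[OF w0 True] by eventually_elim (auto simp: frac_ext_def)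
  thus ?thesis using frac_tendsto_special[OF w0 True] by (rule Lim_transform_eventually[rotated])
next
  case False
  have "isCont frac w0" unfolding frac_def
    by (intro continuous_intros isCont_o2[OF isCont_fst isCont_\<beta>]
        isCont_o2[OF isCont_fst isCont_g] False)
  moreover have "eventually (\<lambda>w. frac w = frac_ext w) (nhds w0)"
    using eventually_g_nonzero[OF False] by eventually_elim (simp add: frac_ext_def)
  ultimately have "isCont frac_ext w0"
    by (simp add: isCont_def Lim_transform_eventually eventually_at_filter eventually_mono
        frac_ext_def False)
  thus ?thesis unfolding isCont_def by (rule tendsto_within_subset) simp
qed

lemma continuous_on_\<Phi>: "continuous_on (X - P) \<Phi>"
proof -
  have "continuous_on (X - P) frac_ext"
    unfolding continuous_on_def using frac_ext_tendsto by (auto intro: tendsto_within_subset)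
  thus ?thesis unfolding \<Phi>_def[abs_def] by (intro continuous_intros)
qed

lemma frac_ext_chart_has_derivative:
  assumes c: "chart X \<gamma> V" and t: "t \<in> V" and gt: "g (fst (\<gamma> t)) \<noteq> 0"
  shows "((\<lambda>s. frac_ext (\<gamma> s)) has_field_derivative
     ((deriv (snd \<circ> \<gamma>) t - deriv \<beta> (fst (\<gamma> t)) * deriv (fst \<circ> \<gamma>) t) * g (fst (\<gamma> t))
        - (snd (\<gamma> t) - \<beta> (fst (\<gamma> t))) * (deriv g (fst (\<gamma> t)) * deriv (fst \<circ> \<gamma>) t))
      / (g (fst (\<gamma> t)) * g (fst (\<gamma> t)))) (at t)"
proof -
  have "open V" "(fst \<circ> \<gamma>) holomorphic_on V" "(snd \<circ> \<gamma>) holomorphic_on V"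
    using c by (auto simp: chart_def)
  hence dX: "((fst \<circ> \<gamma>) has_field_derivative deriv (fst \<circ> \<gamma>) t) (at t)"
    and dY: "((snd \<circ> \<gamma>) has_field_derivative deriv (snd \<circ> \<gamma>) t) (at t)"
    using t by (auto intro: holomorphic_derivI)
  have d\<beta>: "(\<beta> has_field_derivative deriv \<beta> x) (at x)"
    and dg: "(g has_field_derivative deriv g x) (at x)" for x
    using entire_\<beta> entire_g by (auto intro: holomorphic_derivI)
  have dN: "((\<lambda>s. snd (\<gamma> s) - \<beta> (fst (\<gamma> s))) has_field_derivative
      deriv (snd \<circ> \<gamma>) t - deriv \<beta> (fst (\<gamma> t)) * deriv (fst \<circ> \<gamma>) t) (at t)"
    using DERIV_diff[OF dY DERIV_chain[OF d\<beta> dX]] by (simp add: o_def)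
  have dD: "((\<lambda>s. g (fst (\<gamma> s))) has_field_derivative
      deriv g (fst (\<gamma> t)) * deriv (fst \<circ> \<gamma>) t) (at t)"
    using DERIV_chain[OF dg dX] by (simp add: o_def)
  have "isCont (\<lambda>s. g (fst (\<gamma> s))) t"
    by (intro isCont_o2[OF _ isCont_g] isCont_o2[OF _ isCont_fst] chart_isCont[OF c t]
        continuous_ident)
  hence ev: "eventually (\<lambda>s. frac (\<gamma> s) = frac_ext (\<gamma> s)) (nhds t)"
    using gt by (auto simp: isCont_def frac_ext_def eventually_at_filter
        dest!: tendsto_imp_eventually_ne elim!: eventually_mono)
  have "((\<lambda>s. frac (\<gamma> s)) has_field_derivative
     ((deriv (snd \<circ> \<gamma>) t - deriv \<beta> (fst (\<gamma> t)) * deriv (fst \<circ> \<gamma>) t) * g (fst (\<gamma> t))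
        - (snd (\<gamma> t) - \<beta> (fst (\<gamma> t))) * (deriv g (fst (\<gamma> t)) * deriv (fst \<circ> \<gamma>) t))
      / (g (fst (\<gamma> t)) * g (fst (\<gamma> t)))) (at t)"
    unfolding frac_def using DERIV_divide[OF dN dD gt] by simp
  thus ?thesis by (rule DERIV_cong_ev[OF refl ev refl, THEN iffD1])

qed

text \<open>At a special point the singularity of \<open>frac_ext \<circ> \<gamma>\<close> is removable, because
  \<open>frac_ext\<close> is continuous there.\<close>

lemma frac_ext_chart_differentiable:
  assumes c: "chart X \<gamma> V" and t0: "t0 \<in> V" "\<gamma> t0 \<in> X - P"
  shows "(\<lambda>s. frac_ext (\<gamma> s)) field_differentiable (at t0)"
proof (cases "g (fst (\<gamma> t0)) = 0")
  case False
  thus ?thesis using frac_ext_chart_has_derivative[OF c t0(1)] field_differentiable_def by blast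
next
  case True
  have fl: "filterlim \<gamma> (at (\<gamma> t0) within X) (at t0)"
    by (rule filterlim_chart_at_within[OF c t0(1)])
  have "eventually (\<lambda>w. g (fst w) \<noteq> 0) (at (\<gamma> t0) within X)"
    using eventually_regular_near_special[OF t0(2) True]
    by (auto simp: eventually_at_filter elim: eventually_mono)
  hence "eventually (\<lambda>s. g (fst (\<gamma> s)) \<noteq> 0) (at t0)"
    using fl by (rule eventually_compose_filterlim)
  moreover have "eventually (\<lambda>s. s \<in> V) (at t0)"
    using c t0 by (intro eventually_at_in_open') (auto simp: chart_def)
  ultimately have "eventually (\<lambda>s. g (fst (\<gamma> s)) \<noteq> 0 \<and> s \<in> V) (at t0)"
    by eventually_elim simp
  then obtain d where d: "d > 0"
    "\<And>s. s \<noteq> t0 \<Longrightarrow> dist s t0 < d \<Longrightarrow> g (fst (\<gamma> s)) \<noteq> 0 \<and> s \<in> V"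
    unfolding eventually_at by auto
  have hol: "(\<lambda>s. frac_ext (\<gamma> s)) holomorphic_on (ball t0 d - {t0})"
    unfolding holomorphic_on_def
  proof
    fix s assume "s \<in> ball t0 d - {t0}"
    hence "s \<in> V" "g (fst (\<gamma> s)) \<noteq> 0" using d by (auto simp: dist_commute)
    thus "(\<lambda>s. frac_ext (\<gamma> s)) field_differentiable (at s within ball t0 d - {t0})"
      using frac_ext_chart_has_derivative[OF c] field_differentiable_def
        field_differentiable_at_within by blast
  qed
  have "((\<lambda>s. frac_ext (\<gamma> s)) \<longlongrightarrow> frac_ext (\<gamma> t0)) (at t0 within ball t0 d)"
    using filterlim_compose[OF frac_ext_tendsto[OF t0(2)] fl] by (rule tendsto_within_subset) simp
  hence "(\<lambda>s. frac_ext (\<gamma> s)) holomorphic_on ball t0 d"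
    by (intro no_isolated_singularity'[OF _ hol]) auto
  thus ?thesis using d(1) by (intro holomorphic_on_imp_differentiable_at) auto
qed

lemma \<Phi>_comp:
  "fst \<circ> \<Phi> \<circ> \<gamma> = fst \<circ> \<gamma>" "snd \<circ> \<Phi> \<circ> \<gamma> = (\<lambda>s. frac_ext (\<gamma> s))"
  by (auto simp: \<Phi>_def)

lemma holo_on_sub_\<Phi>: "holo_on_sub X (X - P) \<Phi>"
  unfolding holo_on_sub_def
proof (intro allI impI conjI)
  fix \<gamma> V assume c: "chart X \<gamma> V"
  show "(fst \<circ> \<Phi> \<circ> \<gamma>) holomorphic_on V \<inter> \<gamma> -` (X - P)"
    unfolding \<Phi>_comp using c by (auto simp: chart_def intro: holomorphic_on_subset)
  show "(snd \<circ> \<Phi> \<circ> \<gamma>) holomorphic_on V \<inter> \<gamma> -` (X - P)"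
    unfolding \<Phi>_comp holomorphic_on_def
    using frac_ext_chart_differentiable[OF c] field_differentiable_at_within by blast
qed

lemma immersion_\<Phi>:
  assumes c: "chart X \<gamma> V" and t: "t \<in> V" and Y: "\<gamma> t \<in> X - P"
  shows "(deriv (fst \<circ> \<Phi> \<circ> \<gamma>) t, deriv (snd \<circ> \<Phi> \<circ> \<gamma>) t) \<noteq> (0, 0)"
  unfolding \<Phi>_comp
proof
  assume "(deriv (fst \<circ> \<gamma>) t, deriv (\<lambda>s. frac_ext (\<gamma> s)) t) = (0, 0)"
  hence dx: "deriv (fst \<circ> \<gamma>) t = 0" and d: "deriv (\<lambda>s. frac_ext (\<gamma> s)) t = 0" by simp_all
  have dy: "deriv (snd \<circ> \<gamma>) t \<noteq> 0" using c t dx by (auto simp: chart_def)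
  have gt: "g (fst (\<gamma> t)) \<noteq> 0"
    using deriv_fst_chart_nonzero[OF c t special_submersion[OF Y]] dx by auto
  have eq: "deriv (\<lambda>s. frac_ext (\<gamma> s)) t
      = deriv (snd \<circ> \<gamma>) t * g (fst (\<gamma> t)) / (g (fst (\<gamma> t)) * g (fst (\<gamma> t)))"
    using DERIV_imp_deriv[OF frac_ext_chart_has_derivative[OF c t gt]] dx by simp
  have "deriv (snd \<circ> \<gamma>) t * g (fst (\<gamma> t)) / (g (fst (\<gamma> t)) * g (fst (\<gamma> t))) \<noteq> 0"
    using dy gt by simp
  from d this show False unfolding eq by contradiction
qed

lemma inj_on_\<Phi>: "inj_on \<Phi> (X - P)"
proof (rule inj_onI)
  fix z z' assume z: "z \<in> X - P" "z' \<in> X - P" and eq: "\<Phi> z = \<Phi> z'"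
  have f: "fst z = fst z'" and "frac_ext z = frac_ext z'" using eq by (auto simp: \<Phi>_def)
  show "z = z'"
  proof (cases "g (fst z) = 0")
    case True
    thus ?thesis using special_unique[OF z(1) True z(2)] f by simp
  next
    case False
    hence "snd z - \<beta> (fst z) = snd z' - \<beta> (fst z)"
      using \<open>frac_ext z = frac_ext z'\<close> f by (simp add: frac_ext_def frac_def)
    thus ?thesis using f by (simp add: prod_eq_iff)
  qed
qed

lemma frac_ext_tendsto_infinity_at_P:
  assumes l: "l \<in> P"
  shows "filterlim frac_ext at_infinity (at l within X - P)"
proof -
  have ev: "eventually (\<lambda>w. g (fst w) \<noteq> 0) (at l within X - P)"
    using eventually_regular_near_P[OF l] by (auto simp: eventually_at_filter elim: eventually_mono)
  have fst_lim: "(fst \<longlongrightarrow> fst l) (at l within X - P)"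
    by (intro tendsto_fst tendsto_ident_at)
  have "((\<lambda>w. snd w - \<beta> (fst w)) \<longlongrightarrow> snd l - \<beta> (fst l)) (at l within X - P)"
    by (intro tendsto_diff tendsto_snd tendsto_ident_at isCont_tendsto_compose[OF isCont_\<beta> fst_lim])
  moreover have "((\<lambda>w. g (fst w)) \<longlongrightarrow> g (fst l)) (at l within X - P)"
    by (rule isCont_tendsto_compose[OF isCont_g fst_lim])
  hence "((\<lambda>w. g (fst w)) \<longlongrightarrow> 0) (at l within X - P)"
    using g_vanishes_on_P[OF l] by simp
  hence "filterlim (\<lambda>w. g (fst w)) (at 0) (at l within X - P)"
    using ev by (rule filterlim_atI)
  ultimately have "filterlim frac at_infinity (at l within X - P)"
    unfolding frac_def using \<beta>_misses_P[OF l] by (intro filterlim_quotient_at_infinity) auto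
  moreover have "eventually (\<lambda>w. frac w = frac_ext w) (at l within X - P)"
    using ev by eventually_elim (simp add: frac_ext_def)
  ultimately show ?thesis using filterlim_cong[OF refl refl] by blast
qed

lemma frac_ext_unbounded_at_P:
  assumes "l \<in> P" "\<And>n. x n \<in> X - P" "x \<longlonglongrightarrow> l"
  shows "\<not> (\<forall>n. norm (frac_ext (x n)) \<le> M)"
proof -
  have "filterlim x (at l within X - P) sequentially"
    unfolding filterlim_at using assms by (auto intro!: always_eventually)
  from filterlim_compose[OF frac_ext_tendsto_infinity_at_P[OF assms(1)] this]
  have "eventually (\<lambda>n. norm (frac_ext (x n)) > M) sequentially"
    unfolding filterlim_at_infinity_conv_norm_at_top filterlim_at_top_dense by (simp add: o_def)
  show ?thesis
  proof
    assume "\<forall>n. norm (frac_ext (x n)) \<le> M"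
    with \<open>eventually (\<lambda>n. norm (frac_ext (x n)) > M) sequentially\<close>
    have "eventually (\<lambda>n. False) sequentially" by (elim eventually_mono) (meson not_less)
    thus False by simp
  qed
qed

lemma proper_\<Phi>:
  assumes K: "compact K"
  shows "compact ((X - P) \<inter> \<Phi> -` K)"
proof -
  define S0 where "S0 = {z\<in>X. fst z \<in> fst ` K}"
  have "compact (fst ` K)" by (intro compact_continuous_image continuous_intros K)
  hence "compact S0" using proj_proper unfolding S0_def proj_proper_def by blast
  moreover have sub: "(X - P) \<inter> \<Phi> -` K \<subseteq> S0"
    by (force simp: S0_def \<Phi>_def image_iff)
  obtain M where M: "\<And>y. y \<in> K \<Longrightarrow> norm y \<le> M"
    using compact_imp_bounded[OF K] by (meson bounded_iff)
  have "closed ((X - P) \<inter> \<Phi> -` K)"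
    unfolding closed_sequential_limits
  proof (intro allI impI, elim conjE)
    fix x l assume x: "\<forall>n. x n \<in> (X - P) \<inter> \<Phi> -` K" and lim: "x \<longlonglongrightarrow> l"
    have "l \<in> S0"
      by (rule closed_sequentially[OF compact_imp_closed[OF \<open>compact S0\<close>] _ lim])
         (use x sub in blast)
    hence "l \<in> X" by (simp add: S0_def)
    show "l \<in> (X - P) \<inter> \<Phi> -` K"
    proof (cases "l \<in> P")
      case False
      hence "(\<lambda>n. \<Phi> (x n)) \<longlonglongrightarrow> \<Phi> l"
        using continuous_on_\<Phi> \<open>l \<in> X\<close> x lim unfolding continuous_on_sequentially
        by (auto simp: o_def)
      hence "\<Phi> l \<in> K"
        by (rule closed_sequentially[OF compact_imp_closed[OF K], rotated]) (use x in blast)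
      thus ?thesis using False \<open>l \<in> X\<close> by simp
    next
      case True
      have "norm (frac_ext (x n)) \<le> M" for n
      proof -
        have "norm (frac_ext (x n)) \<le> norm (\<Phi> (x n))"
          unfolding \<Phi>_def by (rule norm_snd_le)
        also have "\<dots> \<le> M" using M x by blast
        finally show ?thesis .
      qed
      moreover have "\<And>n. x n \<in> X - P" using x by blast
      ultimately show ?thesis using frac_ext_unbounded_at_P[OF True _ lim] by blast
    qed
  qed
  ultimately have "compact (S0 \<inter> ((X - P) \<inter> \<Phi> -` K))" by (rule compact_Int_closed)
  thus ?thesis using sub by (simp add: Int_absorb1)
qed

lemma continuous_on_inv_\<Phi>: "continuous_on (\<Phi> ` (X - P)) (inv_into (X - P) \<Phi>)"
proof (rule continuous_on_inverse_closed_map[OF continuous_on_\<Phi> refl])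
  show "inv_into (X - P) \<Phi> (\<Phi> x) = x" if "x \<in> X - P" for x
    using inj_on_\<Phi> that by simp
  show "closedin (top_of_set (\<Phi> ` (X - P))) (\<Phi> ` U)"
    if "closedin (top_of_set (X - P)) U" for U
    using that proper_\<Phi> by (intro proper_map) (auto simp: Int_commute)
qed

theorem proper_holo_embedding_\<Phi>: "proper_holo_embedding X (X - P) \<Phi>"
  unfolding proper_holo_embedding_def
  using holo_on_sub_\<Phi> inj_on_\<Phi> immersion_\<Phi> continuous_on_inv_\<Phi> proper_\<Phi> by blast

end

theorem proposition1:
  fixes X P :: "(complex \<times> complex) set"
  assumes "riemann_surface_in_C2 X"
    and "proj_proper X"
    and "closed_discrete_in X P"
    and "\<forall>x. (\<exists>p\<in>P. fst p = x) \<longrightarrow>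
           ({z\<in>X. fst z = x} \<subseteq> P \<or>
            (\<exists>q. {z\<in>X. fst z = x} - P = {q} \<and> proj_submersion_at X q))"
  shows "\<exists>f. proper_holo_embedding X (X - P) f"
proof -
  have A: "\<And>z. \<not> z islimpt fst ` P" using not_islimpt_fst_image[OF assms(2,3)] .
  obtain g where g: "entire_simple_zeros g (fst ` P)" using entire_simple_zeros_exists[OF A] .
  hence g_zero: "\<And>z. g z = 0 \<longleftrightarrow> z \<in> fst ` P" by (simp add: entire_simple_zeros_def)
  obtain v where v: "\<And>p. p \<in> P \<Longrightarrow> snd p \<noteq> v (fst p)"
    "\<And>q. q \<in> X - P \<Longrightarrow> fst q \<in> fst ` P \<Longrightarrow> snd q = v (fst q)"
    using fibre_values_exist[OF assms(2-4)] by blast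
  obtain \<beta> where \<beta>: "\<beta> holomorphic_on UNIV" "\<And>z. z \<in> fst ` P \<Longrightarrow> \<beta> z = v z"
    using entire_interpolation_exists[OF A g] by blast
  interpret shear_embedding X P g \<beta>
  proof
    show "proj_proper X" "closed_discrete_in X P" "\<beta> holomorphic_on UNIV" by (fact assms(2,3) \<beta>(1))+
    show "g holomorphic_on UNIV" "\<And>a. g a = 0 \<Longrightarrow> deriv g a \<noteq> 0"
      using g g_zero by (auto simp: entire_simple_zeros_def)
    show "eventually (\<lambda>x. g x \<noteq> 0) (at a)" for a
      using A[of a] g_zero by (auto simp: islimpt_iff_eventually elim: eventually_mono)
    show "g (fst p) = 0" "\<beta> (fst p) \<noteq> snd p" if "p \<in> P" for p
      using that g_zero v(1)[OF that] \<beta>(2)[of "fst p"] by auto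
    fix z assume z: "z \<in> X - P" "g (fst z) = 0"
    hence zP: "fst z \<in> fst ` P" using g_zero by blast
    show "\<beta> (fst z) = snd z" using v(2)[OF z(1) zP] \<beta>(2)[OF zP] by simp
    show "proj_submersion_at X z" using unique_point_off_P(2)[OF assms(4) z(1) zP] .
    show "z' = z" if "z' \<in> X - P" "fst z' = fst z" for z'
      using unique_point_off_P(1)[OF assms(4) z(1) zP] that by blast
  qed
  show ?thesis using proper_holo_embedding_\<Phi> by blast
qed

end
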